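(* Let $N\ge 1$ and $n\ge 1$ be integers, and let $x>1$ and $1\le y<2$ be real numbers. Let $\mathcal{S}_0,\dots,\mathcal{S}_{n-1}$ be nonempty sets of QPSK sequences of length $N$ such that, for every $0\le i\le n-1$: (a) $\mathrm{PEP}(\mathbf{s})\le x\,y^{2i}N$ for every $\mathbf{s}\in\mathcal{S}_i$; and (b) if $\mathbf{s}\in\mathcal{S}_i$ then $j^m\mathbf{s}\in\mathcal{S}_i$ for every $m\in\mathbb{Z}_4$. Let $\mathcal{A}$ be the set of all $2^{2n}$-QAM sequences associated with tuples $(\mathbf{s}_0,\dots,\mathbf{s}_{n-1})$ with $\mathbf{s}_i\in\mathcal{S}_i$ for all $i$. Then $$\mathrm{PMEPR}(\mathcal{A})<\frac{3}{4}\cdot\frac{x}{(1-\frac{y}{2})^2}.$$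
   Context: Let $j=\sqrt{-1}$. Fix $T>0$ and reals $f_0,\Delta f$ with $T\Delta f$ a positive integer; set $f_k=f_0+k\Delta f$. For a complex sequence $\mathbf{a}=(a_0,\dots,a_{N-1})$ define $S_{\mathbf{a}}(t)=\sum_{k=0}^{N-1}a_ke^{2\pi j f_k t}$, $P_{\mathbf{a}}(t)=|S_{\mathbf{a}}(t)|^2$, and $\mathrm{PEP}(\mathbf{a})=\sup_{t\in[0,T]}P_{\mathbf{a}}(t)$. A QPSK sequence of length $N$ is a sequence $\mathbf{s}=(s_0,\dots,s_{N-1})$ with every $s_k\in\{1,j,-1,-j\}$; $j^m\mathbf{s}=(j^ms_0,\dots,j^ms_{N-1})$. The $2^{2n}$-QAM sequence associated with QPSK sequences $\mathbf{s}_0,\dots,\mathbf{s}_{n-1}$, $\mathbf{s}_i=(s_{i,0},\dots,s_{i,N-1})$, is $\mathbf{a}=(a_0,\dots,a_{N-1})$ with $a_k=\frac{\sqrt2}{2}e^{\pi j/4}\sum_{i=0}^{n-1}2^{n-1-i}s_{i,k}$. The mean envelope power of $\mathcal{A}$ is $P_{av}(\mathcal{A})=\mathbb{E}\big[\frac1T\int_0^TP_{\mathbf{a}}(t)\,dt\big]=\mathbb{E}\|\mathbf{a}\|^2$, where the expectation is over $\mathbf{a}$ associated with $(\mathbf{s}_0,\dots,\mathbf{s}_{n-1})$ chosen uniformly at random from $\mathcal{S}_0\times\cdots\times\mathcal{S}_{n-1}$ (each $\mathbf{s}_i$ uniform in $\mathcal{S}_i$, independently). The peak-to-mean envelope power ratio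 is $\mathrm{PMEPR}(\mathcal{A})=\max_{\mathbf{a}\in\mathcal{A}}\mathrm{PEP}(\mathbf{a})/P_{av}(\mathcal{A})$. *)

theory Defs
  imports "HOL-Analysis.Analysis"
begin

text \<open>Sequences of length N are complex lists of length N; index k corresponds to a_k.\<close>

definition qpsk :: "nat \<Rightarrow> complex list \<Rightarrow> bool" where
  "qpsk N s \<longleftrightarrow> length s = N \<and> set s \<subseteq> {1, \<i>, -1, -\<i>}"

definition rot :: "nat \<Rightarrow> complex list \<Rightarrow> complex list" where
  "rot m s = map (\<lambda>z. \<i> ^ m * z) s"

definition sig :: "real \<Rightarrow> real \<Rightarrow> complex list \<Rightarrow> real \<Rightarrow> complex" where
  "sig f0 df a t = (\<Sum>k<length a. a ! k * exp (2 * pi * \<i> * complex_of_real ((f0 + real k * df) * t)))"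

definition env_power :: "real \<Rightarrow> real \<Rightarrow> complex list \<Rightarrow> real \<Rightarrow> real" where
  "env_power f0 df a t = (cmod (sig f0 df a t))\<^sup>2"

definition PEP :: "real \<Rightarrow> real \<Rightarrow> real \<Rightarrow> complex list \<Rightarrow> real" where
  "PEP T f0 df a = (SUP t\<in>{0..T}. env_power f0 df a t)"

definition qam :: "nat \<Rightarrow> nat \<Rightarrow> (nat \<Rightarrow> complex list) \<Rightarrow> complex list" where
  "qam N n ss = map (\<lambda>k. complex_of_real (sqrt 2 / 2) * exp (complex_of_real pi * \<i> / 4) *
      (\<Sum>i<n. of_nat (2 ^ (n - 1 - i)) * (ss i ! k))) [0..<N]"

definition sqnorm :: "complex list \<Rightarrow> real" where
  "sqnorm a = (\<Sum>k<length a. (cmod (a ! k))\<^sup>2)"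

definition tuples :: "nat \<Rightarrow> (nat \<Rightarrow> complex list set) \<Rightarrow> (nat \<Rightarrow> complex list) set" where
  "tuples n S = PiE {..<n} S"

definition QAM_set :: "nat \<Rightarrow> nat \<Rightarrow> (nat \<Rightarrow> complex list set) \<Rightarrow> complex list set" where
  "QAM_set N n S = qam N n ` tuples n S"

text \<open>Mean envelope power: expectation of ||a||^2 over uniform tuples.\<close>
definition P_av :: "nat \<Rightarrow> nat \<Rightarrow> (nat \<Rightarrow> complex list set) \<Rightarrow> real" where
  "P_av N n S = (\<Sum>ss\<in>tuples n S. sqnorm (qam N n ss)) / real (card (tuples n S))"

definition PMEPR :: "real \<Rightarrow> real \<Rightarrow> real \<Rightarrow> nat \<Rightarrow> nat \<Rightarrow> (nat \<Rightarrow> complex list set) \<Rightarrow> real" where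
  "PMEPR T f0 df N n S = Max (PEP T f0 df ` QAM_set N n S) / P_av N n S"

end

theory Submission
  imports Defs
begin

text \<open>The signal of a QAM sequence is the weighted sum \<open>c \<Sum> 2^(n-1-i) S\<^sub>s\<^sub>i\<close> of the signals
  of its QPSK components, with \<open>|c|\<^sup>2 = 1/2\<close>. The triangle inequality and the hypothesis on the
  components bound every peak power by \<open>x N W\<^sup>2 / 2\<close> with \<open>W = \<Sum> 2^(n-1-i) y^i = (2^n - y^n)/(2 - y)\<close>.
  Invariance of each \<open>\<S>\<^sub>i\<close> under multiplication by \<open>j\<close> makes the cross terms of \<open>\<parallel>a\<parallel>\<^sup>2\<close> average
  to zero, so the mean power is \<open>N/2 \<Sum> 4^(n-1-i) = N (4^n - 1)/6\<close>. The claim then reduces to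
  \<open>(2^n - y^n)\<^sup>2 \<le> (2^n - 1)\<^sup>2 < 4^n - 1\<close>.\<close>

definition qam_scale :: complex where
  "qam_scale = complex_of_real (sqrt 2 / 2) * exp (complex_of_real pi * \<i> / 4)"

lemma norm_qam_scale: "cmod qam_scale = sqrt 2 / 2"
  unfolding qam_scale_def by (simp add: norm_mult)

lemma qam_scale_mult_cnj: "qam_scale * cnj qam_scale = 1 / 2"
proof -
  have "qam_scale * cnj qam_scale = complex_of_real ((cmod qam_scale)\<^sup>2)"
    by (rule complex_norm_square[symmetric])
  also have "\<dots> = 1 / 2" by (simp add: norm_qam_scale power_divide)
  finally show ?thesis .
qed

lemma length_qam [simp]: "length (qam N n ss) = N"
  unfolding qam_def by simp

lemma nth_qam:
  "k < N \<Longrightarrow> qam N n ss ! k = qam_scale * (\<Sum>i<n. of_nat (2 ^ (n - 1 - i)) * (ss i ! k))"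
  unfolding qam_def qam_scale_def by simp

lemma sig_qam:
  assumes "\<And>i. i < n \<Longrightarrow> length (ss i) = N"
  shows "sig f0 df (qam N n ss) t = qam_scale * (\<Sum>i<n. of_nat (2 ^ (n - 1 - i)) * sig f0 df (ss i) t)"
proof -
  define e where "e k = exp (2 * pi * \<i> * complex_of_real ((f0 + real k * df) * t))" for k :: nat
  have "sig f0 df (qam N n ss) t = (\<Sum>k<N. qam_scale * (\<Sum>i<n. of_nat (2 ^ (n - 1 - i)) * (ss i ! k)) * e k)"
    unfolding sig_def e_def by (simp add: nth_qam)
  also have "\<dots> = qam_scale * (\<Sum>i<n. \<Sum>k<N. of_nat (2 ^ (n - 1 - i)) * (ss i ! k * e k))"
    by (simp add: sum_distrib_left sum_distrib_right mult_ac sum.swap[of _ "{..<N}"])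
  also have "\<dots> = qam_scale * (\<Sum>i<n. of_nat (2 ^ (n - 1 - i)) * sig f0 df (ss i) t)"
    unfolding sig_def e_def using assms by (simp add: sum_distrib_left)
  finally show ?thesis .
qed

lemma env_power_le_sum_norm: "env_power f0 df a t \<le> (\<Sum>k<length a. cmod (a ! k))\<^sup>2"
proof -
  have "cmod (sig f0 df a t) \<le>
      (\<Sum>k<length a. cmod (a ! k * exp (2 * pi * \<i> * complex_of_real ((f0 + real k * df) * t))))"
    unfolding sig_def by (rule norm_sum)
  also have "\<dots> = (\<Sum>k<length a. cmod (a ! k))"
    by (simp add: norm_mult)
  finally show ?thesis
    unfolding env_power_def by (simp add: power_mono)
qed

lemma env_power_le_PEP: "t \<in> {0..T} \<Longrightarrow> env_power f0 df a t \<le> PEP T f0 df a"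
  unfolding PEP_def
  by (rule cSUP_upper) (auto intro!: bdd_aboveI2 env_power_le_sum_norm)

lemma norm_sig_le_of_PEP_le:
  assumes "t \<in> {0..T}" and "PEP T f0 df a \<le> r\<^sup>2" and "r \<ge> 0"
  shows "cmod (sig f0 df a t) \<le> r"
proof (rule power2_le_imp_le)
  show "(cmod (sig f0 df a t))\<^sup>2 \<le> r\<^sup>2"
    using env_power_le_PEP[OF assms(1), of f0 df a] assms(2) unfolding env_power_def by linarith
qed (use assms in simp)

lemma PEP_qam_le:
  assumes "T \<ge> 0"
    and "\<And>i. i < n \<Longrightarrow> length (ss i) = N"
    and "\<And>i. i < n \<Longrightarrow> PEP T f0 df (ss i) \<le> (r i)\<^sup>2"
    and "\<And>i. i < n \<Longrightarrow> r i \<ge> 0"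
  shows "PEP T f0 df (qam N n ss) \<le> (\<Sum>i<n. 2 ^ (n - 1 - i) * r i)\<^sup>2 / 2"
  unfolding PEP_def
proof (rule cSUP_least)
  fix t assume t: "t \<in> {0..T}"
  have "cmod (sig f0 df (qam N n ss) t) =
      sqrt 2 / 2 * cmod (\<Sum>i<n. of_nat (2 ^ (n - 1 - i)) * sig f0 df (ss i) t)"
    by (simp add: sig_qam[OF assms(2)] norm_mult norm_qam_scale)
  also have "\<dots> \<le> sqrt 2 / 2 * (\<Sum>i<n. 2 ^ (n - 1 - i) * cmod (sig f0 df (ss i) t))"
    by (intro mult_left_mono order.trans[OF norm_sum]) (simp_all add: norm_mult norm_power)
  also have "\<dots> \<le> sqrt 2 / 2 * (\<Sum>i<n. 2 ^ (n - 1 - i) * r i)"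
    using t assms(3,4) by (intro mult_left_mono sum_mono norm_sig_le_of_PEP_le) auto
  finally have "env_power f0 df (qam N n ss) t \<le> (sqrt 2 / 2 * (\<Sum>i<n. 2 ^ (n - 1 - i) * r i))\<^sup>2"
    unfolding env_power_def by (rule power_mono) simp
  then show "env_power f0 df (qam N n ss) t \<le> (\<Sum>i<n. 2 ^ (n - 1 - i) * r i)\<^sup>2 / 2"
    by (simp add: power_mult_distrib power_divide)
qed (use assms(1) in simp)

lemma rot_rot: "rot m (rot m' s) = rot (m + m') s"
  unfolding rot_def by (simp add: power_add mult_ac)

lemma rot_4: "rot 4 s = s"
  unfolding rot_def by (simp add: map_idI)

lemma qpsk_mult_cnj: "qpsk N s \<Longrightarrow> k < N \<Longrightarrow> s ! k * cnj (s ! k) = 1"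
proof -
  assume "qpsk N s" "k < N"
  then have "s ! k \<in> {1, \<i>, -1, -\<i>}"
    unfolding qpsk_def using nth_mem by blast
  then show ?thesis by auto
qed

lemma finite_qpsk: "finite {s. qpsk N s}"
proof -
  have "finite {s. set s \<subseteq> {1, \<i>, -1, -\<i>} \<and> length s = N}"
    by (rule finite_lists_length_eq) simp
  then show ?thesis
    unfolding qpsk_def by (simp add: conj_commute)
qed

lemma finite_tuples:
  assumes "\<And>i. i < n \<Longrightarrow> finite (S i)"
  shows "finite (tuples n S)"
  unfolding tuples_def using assms by (intro finite_PiE) auto

lemma tuples_nonempty:
  assumes "\<And>i. i < n \<Longrightarrow> S i \<noteq> {}"
  shows "tuples n S \<noteq> {}"
  unfolding tuples_def using assms by (auto simp: PiE_eq_empty_iff)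

lemma Max_PEP_QAM_set_le:
  assumes "T \<ge> 0" and "x \<ge> 0" and "y \<ge> 0"
    and "\<And>i. i < n \<Longrightarrow> S i \<noteq> {}"
    and "\<And>i s. i < n \<Longrightarrow> s \<in> S i \<Longrightarrow> qpsk N s"
    and "\<And>i s. i < n \<Longrightarrow> s \<in> S i \<Longrightarrow> PEP T f0 df s \<le> x * y ^ (2 * i) * real N"
  shows "Max (PEP T f0 df ` QAM_set N n S) \<le> x * real N * (\<Sum>i<n. 2 ^ (n - 1 - i) * y ^ i)\<^sup>2 / 2"
proof -
  have "PEP T f0 df (qam N n ss) \<le> x * real N * (\<Sum>i<n. 2 ^ (n - 1 - i) * y ^ i)\<^sup>2 / 2"
    if ss: "ss \<in> tuples n S" for ss
  proof -
    have ss_i: "ss i \<in> S i" if "i < n" for i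
      using ss that unfolding tuples_def by auto
    have "PEP T f0 df (qam N n ss) \<le> (\<Sum>i<n. 2 ^ (n - 1 - i) * (sqrt (x * real N) * y ^ i))\<^sup>2 / 2"
      using assms(1-3) assms(5,6)[OF _ ss_i] unfolding qpsk_def
      by (intro PEP_qam_le) (auto simp: power_mult_distrib power_mult[symmetric] mult_ac)
    then show ?thesis
      using assms(2) by (simp add: sum_distrib_left[symmetric] mult.left_commute power_mult_distrib)
  qed
  moreover have "finite (S i)" if "i < n" for i
    using assms(5)[OF that] by (blast intro: finite_subset[OF _ finite_qpsk])
  then have "finite (tuples n S)"
    by (rule finite_tuples)
  ultimately show ?thesis
    unfolding QAM_set_def using tuples_nonempty[OF assms(4)] by (subst Max_le_iff) auto
qed

lemma rot_tuple_bij: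
  assumes "\<And>s m. s \<in> S i \<Longrightarrow> m < 4 \<Longrightarrow> rot m s \<in> S i" and "i < n"
  shows "bij_betw (\<lambda>ss. ss(i := rot 1 (ss i))) (tuples n S) (tuples n S)"
proof (rule bij_betw_byWitness[where f' = "\<lambda>ss. ss(i := rot 3 (ss i))"])
  have closed: "ss(i := rot m (ss i)) \<in> tuples n S" if "ss \<in> tuples n S" "m < 4" for ss m
    using that assms(1)[of "ss i" m] assms(2) unfolding tuples_def by (auto simp: PiE_iff extensional_def)
  show "(\<lambda>ss. ss(i := rot 1 (ss i))) ` tuples n S \<subseteq> tuples n S"
       "(\<lambda>ss. ss(i := rot 3 (ss i))) ` tuples n S \<subseteq> tuples n S"
    using closed by auto
qed (auto simp: rot_rot rot_4)

text \<open>Rotating the \<open>i\<close>-th component by \<open>j\<close> permutes the tuples and multiplies each summand by \<open>j\<close>.\<close>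
lemma sum_tuples_cross_eq_0:
  assumes "\<And>s m. s \<in> S i \<Longrightarrow> m < 4 \<Longrightarrow> rot m s \<in> S i"
    and "\<And>s. s \<in> S i \<Longrightarrow> length s = N"
    and "i < n" and "i \<noteq> i'" and "k < N"
  shows "(\<Sum>ss\<in>tuples n S. ss i ! k * cnj (ss i' ! k)) = 0"
proof -
  let ?f = "\<lambda>ss. ss i ! k * cnj (ss i' ! k)"
  have "sum ?f (tuples n S) = (\<Sum>ss\<in>tuples n S. ?f (ss(i := rot 1 (ss i))))"
    using sum.reindex_bij_betw[OF rot_tuple_bij[of S i, OF assms(1,3)], of ?f] by simp
  also have "\<dots> = (\<Sum>ss\<in>tuples n S. \<i> * ?f ss)"
  proof (rule sum.cong)
    fix ss assume "ss \<in> tuples n S"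
    then have "length (ss i) = N" using assms(2,3) unfolding tuples_def by auto
    then show "?f (ss(i := rot 1 (ss i))) = \<i> * ?f ss" using assms(4,5) by (simp add: rot_def)
  qed simp
  also have "\<dots> = \<i> * sum ?f (tuples n S)"
    by (simp add: sum_distrib_left)
  finally have "(1 - \<i>) * sum ?f (tuples n S) = 0"
    by (simp add: algebra_simps)
  then show ?thesis by simp
qed

lemma sum_tuples_mult_cnj:
  assumes "\<And>i s m. i < n \<Longrightarrow> s \<in> S i \<Longrightarrow> m < 4 \<Longrightarrow> rot m s \<in> S i"
    and "\<And>i s. i < n \<Longrightarrow> s \<in> S i \<Longrightarrow> qpsk N s"
    and "i < n" and "i' < n" and "k < N"
  shows "(\<Sum>ss\<in>tuples n S. ss i ! k * cnj (ss i' ! k)) = (if i = i' then of_nat (card (tuples n S)) else 0)"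
proof (cases "i = i'")
  case True
  have "(\<Sum>ss\<in>tuples n S. ss i ! k * cnj (ss i' ! k)) = (\<Sum>ss\<in>tuples n S. 1)"
    using True assms(2,3,5) unfolding tuples_def by (intro sum.cong) (auto intro: qpsk_mult_cnj)
  then show ?thesis using True by simp
next
  case False
  have "\<And>s. s \<in> S i \<Longrightarrow> length s = N" using assms(2,3) unfolding qpsk_def by blast
  with False show ?thesis using sum_tuples_cross_eq_0 assms(1,3,5) by simp
qed

lemma sqnorm_qam:
  "complex_of_real (sqnorm (qam N n ss)) =
     (\<Sum>k<N. 1 / 2 * (\<Sum>i<n. \<Sum>i'<n. of_nat (2 ^ (n - 1 - i) * 2 ^ (n - 1 - i')) * (ss i ! k * cnj (ss i' ! k))))"
proof -
  have "complex_of_real (sqnorm (qam N n ss)) = (\<Sum>k<N. qam N n ss ! k * cnj (qam N n ss ! k))"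
    unfolding sqnorm_def of_real_sum
    by (intro sum.cong) (simp_all add: complex_norm_square[symmetric] del: of_real_power)
  also have "\<dots> = (\<Sum>k<N. qam_scale * cnj qam_scale *
      ((\<Sum>i<n. of_nat (2 ^ (n - 1 - i)) * (ss i ! k)) * (\<Sum>i'<n. of_nat (2 ^ (n - 1 - i')) * cnj (ss i' ! k))))"
    by (intro sum.cong) (simp_all add: nth_qam cnj_sum mult_ac)
  finally show ?thesis
    by (simp add: qam_scale_mult_cnj sum_product mult_ac)
qed

lemma sum_tuples_sqnorm_qam:
  assumes "\<And>i s m. i < n \<Longrightarrow> s \<in> S i \<Longrightarrow> m < 4 \<Longrightarrow> rot m s \<in> S i"
    and "\<And>i s. i < n \<Longrightarrow> s \<in> S i \<Longrightarrow> qpsk N s"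
  shows "(\<Sum>ss\<in>tuples n S. sqnorm (qam N n ss)) =
     real (card (tuples n S)) * real N / 2 * (\<Sum>i<n. 4 ^ (n - 1 - i))"
proof -
  let ?A = "tuples n S"
  have cross: "(\<Sum>ss\<in>?A. ss i ! k * cnj (ss i' ! k)) = (if i = i' then of_nat (card ?A) else 0)"
    if "i < n" "i' < n" "k < N" for i i' k
    using sum_tuples_mult_cnj[OF assms that] .
  have "complex_of_real (\<Sum>ss\<in>?A. sqnorm (qam N n ss)) =
      (\<Sum>k<N. 1 / 2 * (\<Sum>i<n. \<Sum>i'<n. of_nat (2 ^ (n - 1 - i) * 2 ^ (n - 1 - i')) *
        (\<Sum>ss\<in>?A. ss i ! k * cnj (ss i' ! k))))"
    by (simp add: sqnorm_qam sum_distrib_left sum.swap[of _ ?A])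
  also have "\<dots> = (\<Sum>k<N. 1 / 2 * (\<Sum>i<n. \<Sum>i'<n. of_nat (2 ^ (n - 1 - i) * 2 ^ (n - 1 - i')) *
        (if i = i' then of_nat (card ?A) else 0)))"
    by (intro sum.cong refl arg_cong2[where f = "(*)"]) (simp add: cross)
  also have "\<dots> = (\<Sum>k<N. 1 / 2 * (\<Sum>i<n. of_nat (2 ^ (n - 1 - i) * 2 ^ (n - 1 - i)) * of_nat (card ?A)))"
    by (simp add: if_distrib sum.delta cong: if_cong)
  also have "\<dots> = complex_of_real (real (card ?A) * real N / 2 * (\<Sum>i<n. 4 ^ (n - 1 - i)))"
    by (simp add: sum_distrib_left sum_distrib_right power_mult_distrib[symmetric] mult_ac)
  finally show ?thesis
    unfolding of_real_eq_iff .
qed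

lemma P_av_eq:
  assumes "\<And>i. i < n \<Longrightarrow> S i \<noteq> {}"
    and "\<And>i s. i < n \<Longrightarrow> s \<in> S i \<Longrightarrow> qpsk N s"
    and "\<And>i s m. i < n \<Longrightarrow> s \<in> S i \<Longrightarrow> m < 4 \<Longrightarrow> rot m s \<in> S i"
  shows "P_av N n S = real N / 2 * (\<Sum>i<n. 4 ^ (n - 1 - i))"
proof -
  have "finite (tuples n S)"
    using assms(2) by (intro finite_tuples finite_subset[OF _ finite_qpsk]) auto
  then have "card (tuples n S) > 0"
    using tuples_nonempty[OF assms(1)] by (simp add: card_gt_0_iff)
  then show ?thesis
    using sum_tuples_sqnorm_qam[where n = n and S = S and N = N, OF assms(3,2)] unfolding P_av_def by simp
qed

lemma weighted_geometric_sum: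
  fixes y :: real
  shows "(\<Sum>i<n. 2 ^ (n - 1 - i) * y ^ i) * (2 - y) = 2 ^ n - y ^ n"
  using power_diff_sumr2[of y n 2] by (simp add: algebra_simps)

lemma sum_four_powers: "3 * (\<Sum>i<n. 4 ^ (n - 1 - i) :: real) = 4 ^ n - 1"
  using power_diff_sumr2[of "1::real" n 4] by simp

lemma weighted_geometric_sum_sq_lt:
  fixes y :: real
  assumes "n \<ge> 1" and "1 \<le> y" and "y < 2"
  shows "((\<Sum>i<n. 2 ^ (n - 1 - i) * y ^ i) * (2 - y))\<^sup>2 < 3 * (\<Sum>i<n. 4 ^ (n - 1 - i))"
proof -
  have "(2 ^ n - y ^ n)\<^sup>2 \<le> ((2::real) ^ n - 1)\<^sup>2"
    using assms by (intro power_mono) (auto intro: power_mono)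
  also have "\<dots> = 4 ^ n - 2 * 2 ^ n + 1"
    by (simp add: power2_eq_square algebra_simps power_mult_distrib[symmetric])
  also have "\<dots> < 4 ^ n - 1"
    using power_increasing[OF assms(1), of "2::real"] by simp
  finally show ?thesis
    unfolding weighted_geometric_sum sum_four_powers .
qed

lemma PMEPR_bound_numeric:
  fixes x y :: real
  assumes "n \<ge> 1" and "x > 0" and "1 \<le> y" and "y < 2"
  shows "x * (\<Sum>i<n. 2 ^ (n - 1 - i) * y ^ i)\<^sup>2 / (\<Sum>i<n. 4 ^ (n - 1 - i))
    < 3 / 4 * (x / (1 - y / 2)\<^sup>2)"
proof -
  define W where "W = (\<Sum>i<n. 2 ^ (n - 1 - i) * y ^ i)"
  define V where "V = (\<Sum>i<n. 4 ^ (n - 1 - i) :: real)"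
  have "V > 0"
    unfolding V_def using assms(1) by (intro sum_pos) (auto simp: lessThan_empty_iff)
  have "x * W\<^sup>2 / V = x * (W * (2 - y))\<^sup>2 / ((2 - y)\<^sup>2 * V)"
    using assms(4) by (simp add: power_mult_distrib)
  also have "\<dots> < x * (3 * V) / ((2 - y)\<^sup>2 * V)"
    using weighted_geometric_sum_sq_lt[OF assms(1,3,4)] \<open>V > 0\<close> assms(2,4) unfolding W_def V_def
    by (intro divide_strict_right_mono mult_strict_left_mono) auto
  also have "\<dots> = 3 / 4 * (x / ((2 - y) / 2)\<^sup>2)"
    using \<open>V > 0\<close> by (simp add: power_divide)
  also have "\<dots> = 3 / 4 * (x / (1 - y / 2)\<^sup>2)"
    by (simp add: diff_divide_distrib)
  finally show ?thesis
    unfolding W_def V_def .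
qed

theorem corollary1:
  fixes T f0 df x y :: real and N n :: nat and S :: "nat \<Rightarrow> complex list set"
  assumes "T > 0" and "\<exists>k::nat. k > 0 \<and> T * df = real k"
    and "N \<ge> 1" and "n \<ge> 1" and "x > 1" and "1 \<le> y" and "y < 2"
    and "\<And>i. i < n \<Longrightarrow> S i \<noteq> {}"
    and "\<And>i s. i < n \<Longrightarrow> s \<in> S i \<Longrightarrow> qpsk N s"
    and "\<And>i s. i < n \<Longrightarrow> s \<in> S i \<Longrightarrow> PEP T f0 df s \<le> x * y ^ (2 * i) * real N"
    and "\<And>i s m. i < n \<Longrightarrow> s \<in> S i \<Longrightarrow> m < 4 \<Longrightarrow> rot m s \<in> S i"
  shows "PMEPR T f0 df N n S < 3 / 4 * (x / (1 - y / 2)\<^sup>2)"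
proof -
  define W where "W = (\<Sum>i<n. 2 ^ (n - 1 - i) * y ^ i)"
  define V where "V = (\<Sum>i<n. 4 ^ (n - 1 - i) :: real)"
  have "V > 0"
    unfolding V_def using assms(4) by (intro sum_pos) (auto simp: lessThan_empty_iff)
  have Max_le: "Max (PEP T f0 df ` QAM_set N n S) \<le> x * real N * W\<^sup>2 / 2"
    unfolding W_def using assms(1,5,6) by (intro Max_PEP_QAM_set_le assms(8-10)) auto
  have P_av: "P_av N n S = real N / 2 * V"
    unfolding V_def by (rule P_av_eq[OF assms(8,9,11)])
  have "PMEPR T f0 df N n S \<le> (x * real N * W\<^sup>2 / 2) / (real N / 2 * V)"
    unfolding PMEPR_def P_av using Max_le \<open>V > 0\<close> by (intro divide_right_mono) auto
  also have "\<dots> = x * W\<^sup>2 / V"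
    using assms(3) by simp
  also have "\<dots> < 3 / 4 * (x / (1 - y / 2)\<^sup>2)"
    unfolding W_def V_def using assms(4-7) by (intro PMEPR_bound_numeric) auto
  finally show ?thesis .
qed

end
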